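(* Let $G$ be a simple graph on the node set $[d]$. Then the graph associahedron $\Delta_{\mathcal{B}(G)}$ is inscribed if and only if $G$ is a disjoint union of complete graphs.
   Context: The graphical building set $\mathcal{B}(G)$ consists of all nonempty $I\subseteq[d]$ such that the induced subgraph $G[I]$ is connected. For $I\subseteq[d]$, $\Delta_I=\mathrm{conv}(e_i:i\in I)$ and $\Delta_{\mathcal{B}(G)}=\sum_{I\in\mathcal{B}(G)}\Delta_I$ (Minkowski sum). A polytope is inscribed if all its vertices lie on a common sphere. *)

theory Defs
  imports "HOL-Analysis.Analysis" "HOL-Library.Set_Algebras"
begin

text \<open>A simple graph on the finite node set UNIV :: 'n set (identified with [d], d = CARD('n)),
  given by a symmetric irreflexive adjacency relation.\<close>
definition simple_graph :: "('n \<Rightarrow> 'n \<Rightarrow> bool) \<Rightarrow> bool" where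
  "simple_graph E \<longleftrightarrow> (\<forall>u v. E u v \<longrightarrow> E v u) \<and> (\<forall>u. \<not> E u u)"

definition induced_connected :: "('n \<Rightarrow> 'n \<Rightarrow> bool) \<Rightarrow> 'n set \<Rightarrow> bool" where
  "induced_connected E I \<longleftrightarrow> I \<noteq> {} \<and>
     (\<forall>u\<in>I. \<forall>v\<in>I. (u, v) \<in> {(x, y). x \<in> I \<and> y \<in> I \<and> E x y}\<^sup>*)"

definition building_set :: "('n \<Rightarrow> 'n \<Rightarrow> bool) \<Rightarrow> 'n set set" where
  "building_set E = {I. induced_connected E I}"

definition simplex_face :: "'n::finite set \<Rightarrow> (real ^ 'n) set" where
  "simplex_face I = convex hull ((\<lambda>i. axis i 1) ` I)"

definition graph_associahedron :: "('n::finite \<Rightarrow> 'n \<Rightarrow> bool) \<Rightarrow> (real ^ 'n) set" where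
  "graph_associahedron E = (\<Sum>I\<in>building_set E. simplex_face I)"

definition inscribed :: "(real ^ 'n) set \<Rightarrow> bool" where
  "inscribed P \<longleftrightarrow> (\<exists>c r. \<forall>v. v extreme_point_of P \<longrightarrow> dist v c = r)"

definition disjoint_union_of_complete_graphs :: "('n \<Rightarrow> 'n \<Rightarrow> bool) \<Rightarrow> bool" where
  "disjoint_union_of_complete_graphs E \<longleftrightarrow>
     (\<forall>u v. u \<noteq> v \<and> (u, v) \<in> {(x, y). E x y}\<^sup>* \<longrightarrow> E u v)"

end

theory Submission
  imports Defs
begin

text \<open>
  A vertex of the Minkowski sum of the simplices \<open>\<Delta>\<^sub>I\<close>, \<open>I \<in> \<B>\<close>, maximises a linear
  functional \<open>a\<close> that has a strict maximum on every \<open>I \<in> \<B>\<close>; it is the sum of the unit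
  vectors at these maxima, so its \<open>j\<close>-th coordinate counts the building sets on which \<open>a\<close>
  peaks at \<open>j\<close>.

  If \<open>G\<close> is a disjoint union of cliques, the building sets containing \<open>j\<close> on which \<open>a\<close>
  peaks at \<open>j\<close> are the subsets of the component of \<open>j\<close> below \<open>j\<close>, so the \<open>j\<close>-th coordinate
  is \<open>2\<close> to the rank of \<open>j\<close> in its component. Hence every vertex has squared norm
  \<open>4^0 + \<dots> + 4^(|C| - 1)\<close> summed over the components \<open>C\<close>, and the polytope is inscribed
  in a sphere about the origin.

  Otherwise \<open>G\<close> contains an induced path \<open>p - q - s\<close>. For functionals that are smaller on the
  path than elsewhere, swapping the values at \<open>p\<close> and \<open>q\<close> only moves the \<open>p\<close>- and
  \<open>q\<close>-coordinates: from \<open>(3, 2)\<close> to \<open>(1, 4)\<close> when \<open>s\<close> is lowest on the path, and from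
  \<open>(2, 1)\<close> to \<open>(1, 2)\<close> when \<open>s\<close> is highest. A common centre \<open>c\<close> would have to satisfy both
  \<open>c\<^sub>q - c\<^sub>p = 1\<close> and \<open>c\<^sub>p = c\<^sub>q\<close>.
\<close>

definition strict_argmax :: "real ^ 'n \<Rightarrow> 'n set \<Rightarrow> 'n \<Rightarrow> bool" where
  "strict_argmax a I j \<longleftrightarrow> j \<in> I \<and> (\<forall>k\<in>I. k \<noteq> j \<longrightarrow> a $ k < a $ j)"

lemma strict_argmax_unique: "strict_argmax a I j \<Longrightarrow> strict_argmax a I k \<Longrightarrow> j = k"
  unfolding strict_argmax_def by force

lemma finite_ex_argmax:
  fixes f :: "'a \<Rightarrow> 'b::linorder"
  assumes "finite I" "I \<noteq> {}"
  shows "\<exists>j\<in>I. \<forall>k\<in>I. f k \<le> f j"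
proof -
  have "Max (f ` I) \<in> f ` I"
    using assms by (intro Max_in) auto
  then obtain j where "j \<in> I" "f j = Max (f ` I)"
    by auto
  then show ?thesis
    using assms(1) by (metis Max_ge finite_imageI imageI)
qed

lemma strict_argmax_exists:
  assumes "finite I" "I \<noteq> {}" "inj_on (\<lambda>k. a $ k) I"
  shows "\<exists>j. strict_argmax a I j"
proof -
  obtain j where "j \<in> I" "\<forall>k\<in>I. a $ k \<le> a $ j"
    using finite_ex_argmax[OF assms(1,2)] by blast
  then show ?thesis
    using assms(3) unfolding strict_argmax_def inj_on_def by (metis order_le_less)
qed

definition strict_maximizer :: "'a::real_inner \<Rightarrow> 'a set \<Rightarrow> 'a \<Rightarrow> bool" where
  "strict_maximizer a S y \<longleftrightarrow> y \<in> S \<and> (\<forall>z\<in>S. z \<noteq> y \<longrightarrow> a \<bullet> z < a \<bullet> y)"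

lemma strict_maximizer_imp_extreme_point:
  assumes "strict_maximizer a S x"
  shows "x extreme_point_of S"
  unfolding extreme_point_of_def
proof (intro conjI ballI)
  show "x \<in> S" using assms by (simp add: strict_maximizer_def)
  fix u v assume "u \<in> S" "v \<in> S"
  show "x \<notin> open_segment u v"
  proof
    assume "x \<in> open_segment u v"
    then obtain t where t: "0 < t" "t < 1" "x = (1 - t) *\<^sub>R u + t *\<^sub>R v"
      by (auto simp: in_segment)
    have "x \<noteq> u" "x \<noteq> v" using \<open>x \<in> open_segment u v\<close> by (auto simp: open_segment_def)
    then have "a \<bullet> u < a \<bullet> x" "a \<bullet> v < a \<bullet> x"
      using assms \<open>u \<in> S\<close> \<open>v \<in> S\<close> unfolding strict_maximizer_def by auto
    have "a \<bullet> x = (1 - t) * (a \<bullet> u) + t * (a \<bullet> v)"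
      by (simp add: t(3) inner_add_right)
    also have "\<dots> < (1 - t) * (a \<bullet> x) + t * (a \<bullet> x)"
      using t(1,2) \<open>a \<bullet> u < a \<bullet> x\<close> \<open>a \<bullet> v < a \<bullet> x\<close>
      by (intro add_strict_mono mult_strict_left_mono) auto
    finally show False by (simp add: algebra_simps)
  qed
qed

lemma polytope_imp_strict_maximizer:
  fixes P :: "'a::euclidean_space set"
  assumes "polytope P" "x extreme_point_of P"
  shows "\<exists>a. strict_maximizer a P x"
proof -
  have "{x} exposed_face_of P"
    using assms by (simp add: exposed_face_of_polyhedron polytope_imp_polyhedron face_of_singleton)
  then obtain a b where le: "P \<subseteq> {y. a \<bullet> y \<le> b}" and eq: "{x} = P \<inter> {y. a \<bullet> y = b}"
    unfolding exposed_face_of_def by blast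
  have "a \<bullet> z < a \<bullet> x" if "z \<in> P" "z \<noteq> x" for z
  proof -
    have "a \<bullet> z \<le> b" "a \<bullet> z \<noteq> b" using le eq that by auto
    moreover have "a \<bullet> x = b" using eq by auto
    ultimately show ?thesis by simp
  qed
  moreover have "x \<in> P" using eq by auto
  ultimately show ?thesis
    unfolding strict_maximizer_def by blast
qed

lemma strict_maximizer_set_sum_iff:
  fixes S :: "'i \<Rightarrow> 'a::real_inner set"
  assumes fin: "finite A" and s: "\<forall>i\<in>A. s i \<in> S i"
  shows "strict_maximizer a (\<Sum>i\<in>A. S i) (\<Sum>i\<in>A. s i) \<longleftrightarrow>
    (\<forall>i\<in>A. strict_maximizer a (S i) (s i))"
proof
  assume max: "strict_maximizer a (\<Sum>i\<in>A. S i) (\<Sum>i\<in>A. s i)"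
  have "a \<bullet> z < a \<bullet> s i" if i: "i \<in> A" and z: "z \<in> S i" "z \<noteq> s i" for i z
  proof -
    have sum_upd: "(\<Sum>k\<in>A. (s(i := z)) k) = (\<Sum>k\<in>A. s k) - s i + z"
      using fin i by (simp add: sum.remove)
    have "(\<Sum>k\<in>A. (s(i := z)) k) \<in> (\<Sum>k\<in>A. S k)"
      unfolding set_sum_alt[OF fin] using s z by auto
    moreover have "(\<Sum>k\<in>A. (s(i := z)) k) \<noteq> (\<Sum>k\<in>A. s k)"
      using sum_upd z(2) by simp
    ultimately have "a \<bullet> ((\<Sum>k\<in>A. s k) - s i + z) < a \<bullet> (\<Sum>k\<in>A. s k)"
      using max sum_upd unfolding strict_maximizer_def by metis
    then show ?thesis
      by (simp add: inner_diff_right inner_add_right)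
  qed
  then show "\<forall>i\<in>A. strict_maximizer a (S i) (s i)"
    using s unfolding strict_maximizer_def by blast
next
  assume max: "\<forall>i\<in>A. strict_maximizer a (S i) (s i)"
  have "a \<bullet> z < a \<bullet> (\<Sum>i\<in>A. s i)" if z: "z \<in> (\<Sum>i\<in>A. S i)" "z \<noteq> (\<Sum>i\<in>A. s i)" for z
  proof -
    obtain t where t: "\<forall>i\<in>A. t i \<in> S i" "z = (\<Sum>i\<in>A. t i)"
      using z(1) unfolding set_sum_alt[OF fin] by blast
    have lt: "a \<bullet> t i < a \<bullet> s i" if "i \<in> A" "t i \<noteq> s i" for i
      using max t(1) that unfolding strict_maximizer_def by blast
    then have "\<forall>i\<in>A. a \<bullet> t i \<le> a \<bullet> s i"
      by (metis order_refl less_imp_le)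
    moreover have "\<exists>i\<in>A. a \<bullet> t i < a \<bullet> s i"
      using z(2) t(2) lt sum.cong by metis
    ultimately have "(\<Sum>i\<in>A. a \<bullet> t i) < (\<Sum>i\<in>A. a \<bullet> s i)"
      by (rule sum_strict_mono_ex1[OF fin])
    then show ?thesis
      by (simp add: t(2) inner_sum_right)
  qed
  moreover have "(\<Sum>i\<in>A. s i) \<in> (\<Sum>i\<in>A. S i)"
    unfolding set_sum_alt[OF fin] using s by blast
  ultimately show "strict_maximizer a (\<Sum>i\<in>A. S i) (\<Sum>i\<in>A. s i)"
    unfolding strict_maximizer_def by blast
qed

lemma axis_in_simplex_face: "i \<in> I \<Longrightarrow> axis i 1 \<in> simplex_face I"
  unfolding simplex_face_def by (rule hull_inc) auto

lemma simplex_faceD: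
  assumes "s \<in> simplex_face I"
  shows "\<forall>j. 0 \<le> s $ j" "\<forall>j. j \<notin> I \<longrightarrow> s $ j = 0" "(\<Sum>j\<in>UNIV. s $ j) = 1"
proof -
  define K where "K = {s::real^'a. (\<forall>j. 0 \<le> s $ j) \<and> (\<forall>j. j \<notin> I \<longrightarrow> s $ j = 0) \<and> (\<Sum>j\<in>UNIV. s $ j) = 1}"
  have "convex K"
    unfolding convex_def K_def by (auto simp: sum.distrib sum_distrib_left[symmetric])
  moreover have "(\<lambda>i. axis i 1) ` I \<subseteq> K"
    by (auto simp: K_def axis_def)
  ultimately have "simplex_face I \<subseteq> K"
    unfolding simplex_face_def by (rule hull_minimal[rotated])
  then show "\<forall>j. 0 \<le> s $ j" "\<forall>j. j \<notin> I \<longrightarrow> s $ j = 0" "(\<Sum>j\<in>UNIV. s $ j) = 1"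
    using assms by (auto simp: K_def)
qed

lemma simplex_face_inner_gap:
  assumes "s \<in> simplex_face I"
  shows "a $ j - a \<bullet> s = (\<Sum>k\<in>UNIV. (a $ j - a $ k) * s $ k)"
proof -
  have "a $ j = (\<Sum>k\<in>UNIV. a $ j * s $ k)"
    using simplex_faceD(3)[OF assms] by (simp add: sum_distrib_left[symmetric])
  then show ?thesis
    by (simp add: inner_vec_def sum_subtractf left_diff_distrib)
qed

lemma simplex_face_inner_le:
  assumes "s \<in> simplex_face I" "\<forall>k\<in>I. a $ k \<le> a $ j"
  shows "a \<bullet> s \<le> a $ j"
proof -
  have "0 \<le> (a $ j - a $ k) * s $ k" for k
    using simplex_faceD[OF assms(1)] assms(2) by (cases "k \<in> I") auto
  then have "0 \<le> a $ j - a \<bullet> s"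
    unfolding simplex_face_inner_gap[OF assms(1)] by (simp add: sum_nonneg)
  then show ?thesis by simp
qed

lemma simplex_face_inner_eq_imp_axis:
  assumes s: "s \<in> simplex_face I" and j: "strict_argmax a I j" and eq: "a \<bullet> s = a $ j"
  shows "s = axis j 1"
proof -
  have nonneg: "0 \<le> (a $ j - a $ k) * s $ k" for k
    using simplex_faceD[OF s] j unfolding strict_argmax_def
    by (cases "k \<in> I"; cases "k = j") (auto intro: less_imp_le)
  have "(\<Sum>k\<in>UNIV. (a $ j - a $ k) * s $ k) = 0"
    using simplex_face_inner_gap[OF s, of a j] eq by simp
  then have zero: "(a $ j - a $ k) * s $ k = 0" for k
    using nonneg sum_nonneg_eq_0_iff[of UNIV "\<lambda>k. (a $ j - a $ k) * s $ k"] by simp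
  have off: "s $ k = 0" if "k \<noteq> j" for k
  proof (cases "k \<in> I")
    case True
    then have "a $ j - a $ k \<noteq> 0"
      using j that unfolding strict_argmax_def by force
    then show ?thesis
      using zero[of k] by simp
  next
    case False
    then show ?thesis
      using simplex_faceD(2)[OF s] by blast
  qed
  then have "s $ j = 1"
    using simplex_faceD(3)[OF s] by (simp add: sum.remove[of UNIV j])
  then show ?thesis
    using off by (auto simp: vec_eq_iff axis_def)
qed

lemma strict_maximizer_simplex_face_iff:
  "strict_maximizer a (simplex_face I) y \<longleftrightarrow> (\<exists>j. strict_argmax a I j \<and> y = axis j 1)"
proof
  assume max: "strict_maximizer a (simplex_face I) y"
  then have "I \<noteq> {}"
    by (auto simp: strict_maximizer_def simplex_face_def)
  then obtain j where j: "j \<in> I" "\<forall>k\<in>I. a $ k \<le> a $ j"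
    using finite_ex_argmax[of I "\<lambda>k. a $ k"] by auto
  have le: "a \<bullet> y \<le> a $ j"
    using max j(2) simplex_face_inner_le unfolding strict_maximizer_def by blast
  have y: "y = axis j 1"
  proof (rule ccontr)
    assume "y \<noteq> axis j 1"
    then have "a \<bullet> axis j 1 < a \<bullet> y"
      using max axis_in_simplex_face[OF j(1)] unfolding strict_maximizer_def by auto
    then show False
      using le by (simp add: inner_axis)
  qed
  have "a $ k < a $ j" if "k \<in> I" "k \<noteq> j" for k
  proof -
    have "axis k 1 \<noteq> y"
      using y that(2) by (simp add: axis_eq_axis)
    then have "a \<bullet> axis k (1::real) < a \<bullet> y"
      using max axis_in_simplex_face[OF that(1)] unfolding strict_maximizer_def by blast
    then show ?thesis
      using y by (simp add: inner_axis)
  qed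
  then show "\<exists>j. strict_argmax a I j \<and> y = axis j 1"
    using j(1) y unfolding strict_argmax_def by blast
next
  assume "\<exists>j. strict_argmax a I j \<and> y = axis j 1"
  then obtain j where j: "strict_argmax a I j" and y: "y = axis j 1"
    by blast
  have "a \<bullet> z < a \<bullet> y" if "z \<in> simplex_face I" "z \<noteq> y" for z
  proof -
    have "a \<bullet> z \<le> a $ j"
      using simplex_face_inner_le[OF that(1)] j unfolding strict_argmax_def
      by (metis order_le_less)
    moreover have "a \<bullet> z \<noteq> a $ j"
      using simplex_face_inner_eq_imp_axis[OF that(1) j] that(2) y by blast
    ultimately show ?thesis
      by (simp add: y inner_axis)
  qed
  moreover have "y \<in> simplex_face I"
    using j y axis_in_simplex_face unfolding strict_argmax_def by blast
  ultimately show "strict_maximizer a (simplex_face I) y"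
    unfolding strict_maximizer_def by blast
qed

definition greedy_vertex :: "'n set set \<Rightarrow> real ^ 'n \<Rightarrow> real ^ 'n" where
  "greedy_vertex B a = (\<chi> j. real (card {I \<in> B. strict_argmax a I j}))"

lemma polytope_sum_simplex_faces: "polytope (\<Sum>I\<in>B. simplex_face I)"
  by (simp add: simplex_face_def polytope_convex_hull finite_set_sum flip: convex_hull_set_sum)

lemma sum_axis_eq_greedy_vertex:
  assumes "\<forall>I\<in>B. strict_argmax a I (f I)"
  shows "(\<Sum>I\<in>B. axis (f I) 1) = greedy_vertex B a"
proof -
  have "{I\<in>B. f I = j} = {I\<in>B. strict_argmax a I j}" for j
    using assms strict_argmax_unique by blast
  moreover have "(\<Sum>I\<in>B. axis (f I) (1::real)) $ j = real (card {I\<in>B. f I = j})" for j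
    by (simp add: axis_def eq_commute sum.If_cases Int_def)
  ultimately show ?thesis
    by (simp add: vec_eq_iff greedy_vertex_def)
qed

lemma extreme_point_of_sum_simplex_faces_iff:
  "x extreme_point_of (\<Sum>I\<in>B. simplex_face I) \<longleftrightarrow>
    (\<exists>a. (\<forall>I\<in>B. \<exists>j. strict_argmax a I j) \<and> x = greedy_vertex B a)"
proof
  assume x: "x extreme_point_of (\<Sum>I\<in>B. simplex_face I)"
  obtain a where max: "strict_maximizer a (\<Sum>I\<in>B. simplex_face I) x"
    using polytope_imp_strict_maximizer[OF polytope_sum_simplex_faces x] by blast
  obtain s where s: "\<forall>I\<in>B. s I \<in> simplex_face I" and x_eq: "x = (\<Sum>I\<in>B. s I)"
    using x unfolding extreme_point_of_def set_sum_alt[OF finite] by blast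
  have "\<forall>I\<in>B. \<exists>j. strict_argmax a I j \<and> s I = axis j 1"
    using max strict_maximizer_set_sum_iff[OF finite s] strict_maximizer_simplex_face_iff
    unfolding x_eq by blast
  then obtain f where f: "\<forall>I\<in>B. strict_argmax a I (f I) \<and> s I = axis (f I) 1"
    by (metis bchoice)
  then have "x = (\<Sum>I\<in>B. axis (f I) 1)"
    unfolding x_eq by simp
  also have "\<dots> = greedy_vertex B a"
    using f by (intro sum_axis_eq_greedy_vertex) blast
  finally have "x = greedy_vertex B a" .
  then show "\<exists>a. (\<forall>I\<in>B. \<exists>j. strict_argmax a I j) \<and> x = greedy_vertex B a"
    using f by blast
next
  assume "\<exists>a. (\<forall>I\<in>B. \<exists>j. strict_argmax a I j) \<and> x = greedy_vertex B a"
  then obtain a where ex: "\<forall>I\<in>B. \<exists>j. strict_argmax a I j" and x: "x = greedy_vertex B a"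
    by blast
  from bchoice[OF ex] obtain f where f: "\<forall>I\<in>B. strict_argmax a I (f I)"
    by blast
  have "\<forall>I\<in>B. axis (f I) 1 \<in> simplex_face I"
    using f axis_in_simplex_face unfolding strict_argmax_def by blast
  moreover have "\<forall>I\<in>B. strict_maximizer a (simplex_face I) (axis (f I) 1)"
    using f strict_maximizer_simplex_face_iff by blast
  ultimately have "strict_maximizer a (\<Sum>I\<in>B. simplex_face I) (\<Sum>I\<in>B. axis (f I) 1)"
    using strict_maximizer_set_sum_iff[OF finite, of B "\<lambda>I. axis (f I) 1" simplex_face a]
    by blast
  then show "x extreme_point_of (\<Sum>I\<in>B. simplex_face I)"
    unfolding x sum_axis_eq_greedy_vertex[OF f] by (rule strict_maximizer_imp_extreme_point)
qed

lemma greedy_vertex_extreme_point: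
  assumes "\<forall>I\<in>B. I \<noteq> {}" "inj (\<lambda>k. a $ k)"
  shows "greedy_vertex B a extreme_point_of (\<Sum>I\<in>B. simplex_face I)"
proof -
  have "\<forall>I\<in>B. \<exists>j. strict_argmax a I j"
    using assms by (intro ballI strict_argmax_exists) (auto intro: inj_on_subset)
  then show ?thesis
    using extreme_point_of_sum_simplex_faces_iff by blast
qed

lemma greedy_vertex_nth_cong:
  assumes "\<forall>k. a' $ k < a' $ j \<longleftrightarrow> a $ k < a $ j"
  shows "greedy_vertex B a' $ j = greedy_vertex B a $ j"
  using assms by (simp add: greedy_vertex_def strict_argmax_def)

lemma greedy_vertex_nth_bottom:
  assumes "\<forall>k. k \<notin> T \<longrightarrow> a $ t < a $ k"
  shows "greedy_vertex B a $ t = card {I\<in>B. I \<subseteq> T \<and> strict_argmax a I t}"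
proof -
  have "I \<subseteq> T" if "strict_argmax a I t" for I
    using assms that unfolding strict_argmax_def by fastforce
  then have "{I\<in>B. strict_argmax a I t} = {I\<in>B. I \<subseteq> T \<and> strict_argmax a I t}"
    by blast
  then show ?thesis
    by (simp add: greedy_vertex_def)
qed

lemma induced_connected_rtrancl:
  assumes "induced_connected E I" "u \<in> I" "v \<in> I"
  shows "(u, v) \<in> {(x, y). E x y}\<^sup>*"
proof -
  have "(u, v) \<in> {(x, y). x \<in> I \<and> y \<in> I \<and> E x y}\<^sup>*"
    using assms unfolding induced_connected_def by blast
  moreover have "{(x, y). x \<in> I \<and> y \<in> I \<and> E x y} \<subseteq> {(x, y). E x y}"
    by auto
  ultimately show ?thesis
    using rtrancl_mono by blast
qed

lemma induced_connected_clique: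
  assumes "I \<noteq> {}" "\<forall>u\<in>I. \<forall>v\<in>I. u \<noteq> v \<longrightarrow> E u v"
  shows "induced_connected E I"
  unfolding induced_connected_def
proof (intro conjI ballI)
  fix u v assume "u \<in> I" "v \<in> I"
  then show "(u, v) \<in> {(x, y). x \<in> I \<and> y \<in> I \<and> E x y}\<^sup>*"
    using assms(2) by (cases "u = v") (auto intro: r_into_rtrancl)
qed (fact assms(1))

lemma induced_connected_Un:
  assumes I: "induced_connected E I" and J: "induced_connected E J" and m: "m \<in> I \<inter> J"
  shows "induced_connected E (I \<union> J)"
proof -
  define R where "R K = {(x, y). x \<in> K \<and> y \<in> K \<and> E x y}" for K
  have sub: "(R I)\<^sup>* \<subseteq> (R (I \<union> J))\<^sup>*" "(R J)\<^sup>* \<subseteq> (R (I \<union> J))\<^sup>*"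
    unfolding R_def by (intro rtrancl_mono; auto)+
  have "(u, m) \<in> (R (I \<union> J))\<^sup>* \<and> (m, u) \<in> (R (I \<union> J))\<^sup>*" if "u \<in> I \<union> J" for u
    using that m I J sub unfolding induced_connected_def R_def by blast
  then have "(u, v) \<in> (R (I \<union> J))\<^sup>*" if "u \<in> I \<union> J" "v \<in> I \<union> J" for u v
    using that rtrancl_trans by metis
  then show ?thesis
    using m unfolding induced_connected_def R_def by blast
qed

lemma not_induced_connected_doubleton:
  assumes "u \<noteq> v" "\<not> E u v" "\<not> E v u"
  shows "\<not> induced_connected E {u, v}"
proof
  assume "induced_connected E {u, v}"
  then have "(u, v) \<in> {(x, y). x \<in> {u, v} \<and> y \<in> {u, v} \<and> E x y}\<^sup>*"
    unfolding induced_connected_def by blast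
  moreover have "{(x, y). x \<in> {u, v} \<and> y \<in> {u, v} \<and> E x y} \<subseteq> Id"
    using assms by auto
  ultimately have "(u, v) \<in> Id\<^sup>*"
    using rtrancl_mono by blast
  then show False
    using assms(1) by simp
qed

lemma reachable_non_adjacent_imp_induced_path:
  assumes "(u, w) \<in> {(x, y). E x y}\<^sup>*" "u \<noteq> w" "\<not> E u w"
  shows "\<exists>p q s. E p q \<and> E q s \<and> p \<noteq> s \<and> \<not> E p s"
  using assms
proof (induction rule: rtrancl_induct)
  case (step y z)
  then show ?case
    by (cases "u = y"; cases "E u y") auto
qed simp

lemma building_sets_in_induced_path:
  assumes "simple_graph E" "E p q" "E q s" "p \<noteq> s" "\<not> E p s"
  shows "{I \<in> building_set E. I \<subseteq> {p, q, s}} = {{p}, {q}, {s}, {p, q}, {q, s}, {p, q, s}}"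
    (is "?lhs = ?rhs")
proof
  have E: "E p q" "E q p" "E q s" "E s q" "\<not> E p s" "\<not> E s p"
    using assms unfolding simple_graph_def by blast+
  have pq: "induced_connected E {p, q}" and qs: "induced_connected E {q, s}"
    using E by (auto intro!: induced_connected_clique)
  have "induced_connected E ({p, q} \<union> {q, s})"
    using pq qs by (rule induced_connected_Un[where m = q]) simp
  moreover have "induced_connected E {v}" for v
    by (auto intro: induced_connected_clique)
  ultimately show "?rhs \<subseteq> ?lhs"
    using pq qs by (auto simp: building_set_def insert_commute)
  show "?lhs \<subseteq> ?rhs"
  proof
    fix I assume I: "I \<in> ?lhs"
    then have "I \<in> Pow {p, q, s}"
      by blast
    then have "I \<in> {{}, {p}, {q}, {s}, {p, q}, {p, s}, {q, s}, {p, q, s}}"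
      by (auto simp: Pow_insert insert_commute)
    moreover have "I \<noteq> {}"
      using I by (auto simp: building_set_def induced_connected_def)
    moreover have "I \<noteq> {p, s}"
      using I E assms(4) not_induced_connected_doubleton[of p s E] by (auto simp: building_set_def)
    ultimately show "I \<in> ?rhs"
      by auto
  qed
qed

lemma greedy_vertex_nth_induced_path:
  assumes "simple_graph E" "E p q" "E q s" "p \<noteq> s" "\<not> E p s"
    and below: "\<forall>k. k \<notin> {p, q, s} \<longrightarrow> a $ t < a $ k"
  shows "greedy_vertex (building_set E) a $ t =
    length (filter (\<lambda>I. strict_argmax a I t) [{p}, {q}, {s}, {p, q}, {q, s}, {p, q, s}])"
proof -
  define Ps where "Ps = [{p}, {q}, {s}, {p, q}, {q, s}, {p, q, s}]"
  have "p \<noteq> q" "q \<noteq> s"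
    using assms(1-3) unfolding simple_graph_def by auto
  then have "distinct Ps"
    using assms(4) by (auto simp: Ps_def doubleton_eq_iff insert_eq_iff)
  have Ps: "{I \<in> building_set E. I \<subseteq> {p, q, s}} = set Ps"
    unfolding Ps_def using building_sets_in_induced_path[OF assms(1-5)] by simp
  have "greedy_vertex (building_set E) a $ t
      = card {I \<in> building_set E. I \<subseteq> {p, q, s} \<and> strict_argmax a I t}"
    using below by (rule greedy_vertex_nth_bottom)
  also have "{I \<in> building_set E. I \<subseteq> {p, q, s} \<and> strict_argmax a I t}
      = set (filter (\<lambda>I. strict_argmax a I t) Ps)"
    unfolding set_filter using Ps by blast
  also have "card \<dots> = length (filter (\<lambda>I. strict_argmax a I t) Ps)"
    using \<open>distinct Ps\<close> by (intro distinct_card distinct_filter)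
  finally show ?thesis
    unfolding Ps_def .
qed

lemma dist_eq_imp_sum_sq_eq:
  fixes u v c :: "real ^ 'n::finite"
  assumes "dist u c = dist v c" "\<forall>j. j \<notin> S \<longrightarrow> u $ j = v $ j"
  shows "(\<Sum>j\<in>S. (u $ j - c $ j)\<^sup>2) = (\<Sum>j\<in>S. (v $ j - c $ j)\<^sup>2)"
proof -
  have split: "(dist w c)\<^sup>2 = (\<Sum>j\<in>UNIV - S. (w $ j - c $ j)\<^sup>2) + (\<Sum>j\<in>S. (w $ j - c $ j)\<^sup>2)"
    for w :: "real ^ 'n"
  proof -
    have "(dist w c)\<^sup>2 = (\<Sum>j\<in>UNIV. (w $ j - c $ j)\<^sup>2)"
      unfolding dist_norm power2_norm_eq_inner inner_vec_def by (simp add: power2_eq_square)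
    then show ?thesis
      by (simp add: sum.subset_diff[of S UNIV])
  qed
  have "(\<Sum>j\<in>UNIV - S. (u $ j - c $ j)\<^sup>2) = (\<Sum>j\<in>UNIV - S. (v $ j - c $ j)\<^sup>2)"
    using assms(2) by (intro sum.cong) auto
  then show ?thesis
    using split[of u] split[of v] assms(1) by simp
qed

lemma induced_path_imp_not_inscribed:
  fixes E :: "'n::finite \<Rightarrow> 'n \<Rightarrow> bool"
  assumes sg: "simple_graph E" and path: "E p q" "E q s" "p \<noteq> s" "\<not> E p s"
  shows "\<not> inscribed (graph_associahedron E)"
proof
  assume "inscribed (graph_associahedron E)"
  then obtain c r where sphere: "\<And>v. v extreme_point_of graph_associahedron E \<Longrightarrow> dist v c = r"
    unfolding inscribed_def by blast
  have pqs: "p \<noteq> q" "q \<noteq> s" "p \<noteq> s"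
    using sg path unfolding simple_graph_def by auto
  obtain idx :: "'n \<Rightarrow> nat" where idx: "inj idx"
    using finite_imp_inj_to_nat_seg[of "UNIV :: 'n set"] by auto
  \<comment> \<open>The path lies below all other nodes, so its coordinates only see building sets inside it.\<close>
  define w where "w x y z = (\<chi> i. if i = p then x else if i = q then y else if i = s then z
    else 3 + real (idx i))" for x y z :: real
  define v where "v x y z = greedy_vertex (building_set E) (w x y z)" for x y z
  have w_path: "w x y z $ p = x" "w x y z $ q = y" "w x y z $ s = z" for x y z
    using pqs by (simp_all add: w_def)
  have vertex: "v x y z extreme_point_of graph_associahedron E"
    if "x \<in> {0, 1, 2}" "y \<in> {0, 1, 2}" "z \<in> {0, 1, 2}" "distinct [x, y, z]" for x y z
  proof -
    have "\<forall>I\<in>building_set E. I \<noteq> {}"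
      by (simp add: building_set_def induced_connected_def)
    moreover have "inj (\<lambda>k. w x y z $ k)"
      using that idx pqs by (auto simp: inj_def w_def split: if_splits)
    ultimately show ?thesis
      unfolding graph_associahedron_def v_def by (rule greedy_vertex_extreme_point)
  qed
  have below: "\<forall>k. k \<notin> {p, q, s} \<longrightarrow> w x y z $ t < w x y z $ k"
    if "t \<in> {p, q, s}" "x \<le> 2" "y \<le> 2" "z \<le> 2" for x y z t
    using that by (auto simp: w_def)
  have coords:
    "v 2 1 0 $ p = 3" "v 2 1 0 $ q = 2" "v 1 2 0 $ p = 1" "v 1 2 0 $ q = 4"
    "v 1 0 2 $ p = 2" "v 1 0 2 $ q = 1" "v 0 1 2 $ p = 1" "v 0 1 2 $ q = 2"
    using pqs pqs[THEN not_sym] unfolding v_def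
    by (simp_all add: greedy_vertex_nth_induced_path[OF sg path below] strict_argmax_def w_path)
  have swap: "v x y z $ j = v y x z $ j"
    if "j \<notin> {p, q}" "z < min x y \<or> max x y < z" "x \<le> 2" "y \<le> 2" "z \<le> 2" for x y z j
    unfolding v_def using that by (intro greedy_vertex_nth_cong) (auto simp: w_def)
  have pair: "(u $ p - c $ p)\<^sup>2 + (u $ q - c $ q)\<^sup>2 = (u' $ p - c $ p)\<^sup>2 + (u' $ q - c $ q)\<^sup>2"
    if "u extreme_point_of graph_associahedron E" "u' extreme_point_of graph_associahedron E"
      "\<forall>j. j \<notin> {p, q} \<longrightarrow> u $ j = u' $ j" for u u'
    using dist_eq_imp_sum_sq_eq[of u c u' "{p, q}"] sphere that pqs by simp
  have "(3 - c $ p)\<^sup>2 + (2 - c $ q)\<^sup>2 = (1 - c $ p)\<^sup>2 + (4 - c $ q)\<^sup>2"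
    using pair[OF vertex[of 2 1 0] vertex[of 1 2 0]] swap[where x = 2 and y = 1 and z = 0]
    by (simp add: coords)
  moreover have "(2 - c $ p)\<^sup>2 + (1 - c $ q)\<^sup>2 = (1 - c $ p)\<^sup>2 + (2 - c $ q)\<^sup>2"
    using pair[OF vertex[of 1 0 2] vertex[of 0 1 2]] swap[where x = 1 and y = 0 and z = 2]
    by (simp add: coords)
  ultimately show False
    by (simp add: power2_eq_square algebra_simps)
qed

definition component :: "('n \<Rightarrow> 'n \<Rightarrow> bool) \<Rightarrow> 'n \<Rightarrow> 'n set" where
  "component E j = {k. (j, k) \<in> {(x, y). E x y}\<^sup>*}"

lemma self_in_component: "j \<in> component E j"
  by (simp add: component_def)

lemma component_eq:
  assumes "simple_graph E" "k \<in> component E j"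
  shows "component E k = component E j"
proof -
  have "sym {(x, y). E x y}"
    using assms(1) unfolding simple_graph_def sym_def by blast
  then have "sym ({(x, y). E x y}\<^sup>*)"
    by (rule sym_rtrancl)
  then show ?thesis
    using assms(2) unfolding component_def by (auto dest: symD intro: rtrancl_trans)
qed

lemma building_set_iff_subset_component:
  assumes sg: "simple_graph E" and cliques: "disjoint_union_of_complete_graphs E" and "j \<in> I"
  shows "I \<in> building_set E \<longleftrightarrow> I \<subseteq> component E j"
proof
  assume "I \<in> building_set E"
  then show "I \<subseteq> component E j"
    using induced_connected_rtrancl \<open>j \<in> I\<close> unfolding building_set_def component_def by fast
next
  assume I: "I \<subseteq> component E j"
  have "E u v" if "u \<in> I" "v \<in> I" "u \<noteq> v" for u v
  proof -
    have "v \<in> component E u"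
      using component_eq[OF sg] I that(1,2) by blast
    then show ?thesis
      using cliques that(3) unfolding disjoint_union_of_complete_graphs_def component_def by blast
  qed
  then show "I \<in> building_set E"
    using \<open>j \<in> I\<close> unfolding building_set_def by (auto intro: induced_connected_clique)
qed

lemma inj_on_component_if_strict_argmax:
  assumes sg: "simple_graph E" and cliques: "disjoint_union_of_complete_graphs E"
    and argmax: "\<forall>I\<in>building_set E. \<exists>m. strict_argmax a I m"
  shows "inj_on (\<lambda>k. a $ k) (component E j)"
proof (rule inj_onI)
  fix k l assume kl: "k \<in> component E j" "l \<in> component E j" "a $ k = a $ l"
  have "component E l = component E k"
    using component_eq[OF sg kl(1)] component_eq[OF sg kl(2)] by simp
  then have "{k, l} \<subseteq> component E k"
    using self_in_component[of k E] self_in_component[of l E] by blast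
  then have "{k, l} \<in> building_set E"
    using building_set_iff_subset_component[OF sg cliques, of k "{k, l}"] by simp
  then obtain m where "strict_argmax a {k, l} m"
    using argmax by blast
  then show "k = l"
    using kl(3) unfolding strict_argmax_def by auto
qed

lemma card_supsets_containing:
  assumes "finite L" "j \<in> L"
  shows "card {I. j \<in> I \<and> I \<subseteq> L} = 2 ^ (card L - 1)"
proof -
  have "{I. j \<in> I \<and> I \<subseteq> L} = insert j ` Pow (L - {j})"
  proof
    show "{I. j \<in> I \<and> I \<subseteq> L} \<subseteq> insert j ` Pow (L - {j})"
    proof
      fix I assume "I \<in> {I. j \<in> I \<and> I \<subseteq> L}"
      then have "I = insert j (I - {j})" "I - {j} \<in> Pow (L - {j})"
        by auto
      then show "I \<in> insert j ` Pow (L - {j})"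
        by blast
    qed
  qed (use assms(2) in auto)
  moreover have "inj_on (insert j) (Pow (L - {j}))"
    by (rule inj_onI) (metis Diff_insert_absorb PowD subset_Diff_insert)
  ultimately show ?thesis
    using assms by (simp add: card_image card_Pow)
qed

lemma sum_over_ranks:
  fixes f :: "'a \<Rightarrow> 'b::linorder"
  assumes fin: "finite C" and inj: "inj_on f C"
  shows "(\<Sum>j\<in>C. g (card {k\<in>C. f k < f j})) = (\<Sum>m<card C. g m)"
proof -
  define r where "r j = card {k\<in>C. f k < f j}" for j
  have less: "r j < r l" if "j \<in> C" "f j < f l" for j l
    unfolding r_def using fin that by (intro psubset_card_mono) auto
  have inj_r: "inj_on r C"
  proof (rule inj_onI)
    fix j l assume jl: "j \<in> C" "l \<in> C" "r j = r l"
    show "j = l"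
    proof (rule ccontr)
      assume "j \<noteq> l"
      then have "f j \<noteq> f l"
        using inj jl(1,2) unfolding inj_on_def by blast
      then show False
        using less[of j l] less[of l j] jl by (auto simp: neq_iff)
    qed
  qed
  have sub: "r ` C \<subseteq> {..<card C}"
  proof
    fix m assume "m \<in> r ` C"
    then obtain j where j: "j \<in> C" "m = r j"
      by blast
    have "r j \<le> card (C - {j})"
      unfolding r_def using fin by (intro card_mono) auto
    also have "\<dots> < card C"
      using fin j(1) by (rule card_Diff1_less)
    finally show "m \<in> {..<card C}"
      using j(2) by simp
  qed
  have "card (r ` C) = card {..<card C}"
    using card_image[OF inj_r] by simp
  then have "r ` C = {..<card C}"
    using card_subset_eq[OF finite_lessThan sub] by blast
  then have "(\<Sum>m<card C. g m) = (\<Sum>j\<in>C. g (r j))"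
    using sum.reindex[OF inj_r, of g] by simp
  then show ?thesis
    unfolding r_def by simp
qed

lemma greedy_vertex_nth_complete_components:
  assumes sg: "simple_graph E" and cliques: "disjoint_union_of_complete_graphs E"
    and argmax: "\<forall>I\<in>building_set E. \<exists>m. strict_argmax a I m"
  shows "greedy_vertex (building_set E) a $ j = 2 ^ card {k \<in> component E j. a $ k < a $ j}"
proof -
  define C where "C = component E j"
  define L where "L = {k \<in> C. a $ k \<le> a $ j}"
  have j: "j \<in> C"
    unfolding C_def by (rule self_in_component)
  have inj: "inj_on (\<lambda>k. a $ k) C"
    unfolding C_def using assms by (rule inj_on_component_if_strict_argmax)
  have building: "I \<in> building_set E \<longleftrightarrow> I \<subseteq> C" if "j \<in> I" for I
    unfolding C_def using sg cliques that by (rule building_set_iff_subset_component)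
  have "{I \<in> building_set E. strict_argmax a I j} = {I. j \<in> I \<and> I \<subseteq> L}"
  proof (intro equalityI subsetI)
    fix I assume "I \<in> {I \<in> building_set E. strict_argmax a I j}"
    then have I: "I \<in> building_set E" "j \<in> I" "\<forall>k\<in>I. k \<noteq> j \<longrightarrow> a $ k < a $ j"
      unfolding strict_argmax_def by auto
    have "a $ k \<le> a $ j" if "k \<in> I" for k
      using I(3) that by (cases "k = j") auto
    then show "I \<in> {I. j \<in> I \<and> I \<subseteq> L}"
      using I building unfolding L_def by blast
  next
    fix I assume "I \<in> {I. j \<in> I \<and> I \<subseteq> L}"
    then have I: "j \<in> I" "I \<subseteq> L"
      by auto
    have "a $ k < a $ j" if "k \<in> I" "k \<noteq> j" for k
      using I(2) that inj_onD[OF inj _ _ j] unfolding L_def by (force simp: order_le_less)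
    moreover have "I \<in> building_set E"
      using I building unfolding L_def by blast
    ultimately show "I \<in> {I \<in> building_set E. strict_argmax a I j}"
      using I(1) unfolding strict_argmax_def by blast
  qed
  moreover have "L = insert j {k \<in> C. a $ k < a $ j}"
    using j inj_onD[OF inj _ _ j] unfolding L_def by (force simp: order_le_less)
  then have "card L - 1 = card {k \<in> C. a $ k < a $ j}"
    by simp
  ultimately show ?thesis
    using card_supsets_containing[of L j] j unfolding greedy_vertex_def C_def L_def by simp
qed

lemma component_class:
  assumes "simple_graph E"
  shows "{j \<in> UNIV. component E j = component E i} = component E i"
proof (intro equalityI subsetI)
  fix j assume "j \<in> {j \<in> UNIV. component E j = component E i}"
  then show "j \<in> component E i"
    using self_in_component[of j E] by simp
next
  fix j assume "j \<in> component E i"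
  then show "j \<in> {j \<in> UNIV. component E j = component E i}"
    using component_eq[OF assms] by simp
qed

lemma inner_self_greedy_vertex_complete_components:
  fixes E :: "'n::finite \<Rightarrow> 'n \<Rightarrow> bool"
  assumes sg: "simple_graph E" and cliques: "disjoint_union_of_complete_graphs E"
    and argmax: "\<forall>I\<in>building_set E. \<exists>m. strict_argmax a I m"
  shows "greedy_vertex (building_set E) a \<bullet> greedy_vertex (building_set E) a
    = (\<Sum>C\<in>range (component E). \<Sum>m<card C. 4 ^ m)"
proof -
  define r where "r j = card {k \<in> component E j. a $ k < a $ j}" for j
  have "greedy_vertex (building_set E) a $ j = 2 ^ r j" for j
    unfolding r_def by (rule greedy_vertex_nth_complete_components[OF assms])
  then have "greedy_vertex (building_set E) a \<bullet> greedy_vertex (building_set E) a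
      = (\<Sum>j\<in>UNIV. (4::real) ^ r j)"
    by (simp add: inner_vec_def power_mult_distrib[symmetric])
  also have "\<dots> = (\<Sum>C\<in>range (component E). \<Sum>j\<in>{j \<in> UNIV. component E j = C}. 4 ^ r j)"
    by (rule sum.group[symmetric]) auto
  also have "\<dots> = (\<Sum>C\<in>range (component E). \<Sum>m<card C. 4 ^ m)"
  proof (rule sum.cong[OF refl])
    fix C assume "C \<in> range (component E)"
    then obtain i where C: "C = component E i"
      by blast
    have "r j = card {k \<in> C. a $ k < a $ j}" if "j \<in> C" for j
      using component_eq[OF sg that[unfolded C]] unfolding C r_def by simp
    then have "(\<Sum>j\<in>{j \<in> UNIV. component E j = C}. (4::real) ^ r j)
        = (\<Sum>j\<in>C. 4 ^ card {k \<in> C. a $ k < a $ j})"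
      using component_class[OF sg, of i] unfolding C by simp
    also have "\<dots> = (\<Sum>m<card C. 4 ^ m)"
      unfolding C using inj_on_component_if_strict_argmax[OF assms]
      by (rule sum_over_ranks[OF finite])
    finally show "(\<Sum>j\<in>{j \<in> UNIV. component E j = C}. (4::real) ^ r j) = (\<Sum>m<card C. 4 ^ m)" .
  qed
  finally show ?thesis .
qed

lemma complete_components_imp_inscribed:
  fixes E :: "'n::finite \<Rightarrow> 'n \<Rightarrow> bool"
  assumes sg: "simple_graph E" and cliques: "disjoint_union_of_complete_graphs E"
  shows "inscribed (graph_associahedron E)"
proof -
  have "dist x 0 = sqrt (\<Sum>C\<in>range (component E). \<Sum>m<card C. 4 ^ m)"
    if vertex: "x extreme_point_of graph_associahedron E" for x
  proof -
    obtain a where "\<forall>I\<in>building_set E. \<exists>m. strict_argmax a I m"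
      and "x = greedy_vertex (building_set E) a"
      using vertex unfolding graph_associahedron_def extreme_point_of_sum_simplex_faces_iff by blast
    then have "x \<bullet> x = (\<Sum>C\<in>range (component E). \<Sum>m<card C. 4 ^ m)"
      using inner_self_greedy_vertex_complete_components[OF sg cliques] by blast
    then show ?thesis
      by (simp add: dist_norm norm_eq_sqrt_inner)
  qed
  then show ?thesis
    unfolding inscribed_def by blast
qed

theorem corollary4p21:
  fixes E :: "'n::finite \<Rightarrow> 'n \<Rightarrow> bool"
  assumes "simple_graph E"
  shows "inscribed (graph_associahedron E) \<longleftrightarrow> disjoint_union_of_complete_graphs E"
proof
  assume inscribed: "inscribed (graph_associahedron E)"
  show "disjoint_union_of_complete_graphs E"
    unfolding disjoint_union_of_complete_graphs_def
  proof (intro allI impI)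
    fix u v assume uv: "u \<noteq> v \<and> (u, v) \<in> {(x, y). E x y}\<^sup>*"
    show "E u v"
    proof (rule ccontr)
      assume "\<not> E u v"
      then obtain p q s where "E p q" "E q s" "p \<noteq> s" "\<not> E p s"
        using reachable_non_adjacent_imp_induced_path[of u v E] uv by blast
      then show False
        using induced_path_imp_not_inscribed[OF assms] inscribed by simp
    qed
  qed
next
  assume "disjoint_union_of_complete_graphs E"
  then show "inscribed (graph_associahedron E)"
    by (rule complete_components_imp_inscribed[OF assms])
qed

end
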